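(* Let $\delta\in(0,1)$ and $c_2(\delta,d):=\mathbb{E}_{\mathbf{x}\sim U^d}[\mathbf{x}[2]^2\mid\mathbf{x}[1]\ge\delta]$. Then $$c_2(\delta,d)\ge\frac{1}{3d}\left(\frac34-\frac12\delta-\frac14\delta^2\right)^3.$$
   Context: $U^d$ denotes the uniform distribution over the $d$-dimensional unit sphere; $\mathbf{x}[i]$ is the $i$-th coordinate of $\mathbf{x}$. *)

theory Defs
  imports "HOL-Analysis.Analysis"
begin

text \<open>Uniform distribution U^d on the unit sphere of R^d (d = CARD('n)):
  the law of y / |y| where y is uniform on the open unit ball.\<close>
definition sphere_unif :: "(real ^ 'n) measure" where
  "sphere_unif = distr (uniform_measure lborel (ball 0 1)) borel (\<lambda>y. y /\<^sub>R norm y)"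

definition cond_expect_event :: "'a measure \<Rightarrow> ('a \<Rightarrow> real) \<Rightarrow> 'a set \<Rightarrow> real" where
  "cond_expect_event M f A = (LINT x:A|M. f x) / measure M A"

text \<open>c_2(delta,d) = E_{x ~ U^d}[ x[j]^2 | x[i] >= delta ] for coordinates i (first) and j (second).\<close>
definition c2 :: "real \<Rightarrow> 'n::finite \<Rightarrow> 'n \<Rightarrow> real" where
  "c2 \<delta> i j = cond_expect_event (sphere_unif :: (real ^ 'n) measure) (\<lambda>x. (x $ j)\<^sup>2) {x. x $ i \<ge> \<delta>}"

end

theory Submission
  imports Defs
begin

text \<open>Let \<open>A\<close> be the cap \<open>x\<^sub>i \<ge> \<delta>\<close> of the sphere. Since \<open>\<Sum>\<^sub>k x\<^sub>k\<^sup>2 = 1\<close> and the coordinates other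
  than \<open>i\<close> are exchangeable on \<open>A\<close>, \<open>(d - 1) E[x\<^sub>j\<^sup>2; A] = E[1 - x\<^sub>i\<^sup>2; A]\<close>. Take a thinner cap
  \<open>T = {x\<^sub>i \<ge> cos \<alpha>}\<close> and an angle \<open>\<theta>\<close> with \<open>2\<alpha> < \<theta>\<close> and \<open>\<theta> + \<alpha> \<le> arccos \<delta>\<close>: then \<open>T\<close> and its
  rotations by \<open>\<plusminus>\<theta>\<close> in the \<open>(i, j)\<close>-plane are disjoint subsets of \<open>A\<close>, so \<open>P(T) \<le> P(A) / 3\<close> by
  rotation invariance. Off \<open>T\<close> we have \<open>1 - x\<^sub>i\<^sup>2 \<ge> sin\<^sup>2 \<alpha>\<close>, hence
  \<open>(d - 1) E[x\<^sub>j\<^sup>2; A] \<ge> (2/3) sin\<^sup>2 \<alpha> P(A)\<close>, and \<open>\<alpha>, \<theta>\<close> can be chosen with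
  \<open>2 sin\<^sup>2 \<alpha> \<ge> (3/4 - \<delta>/2 - \<delta>\<^sup>2/4)\<^sup>3\<close>. Rotation invariance of the uniform distribution comes from
  that of Lebesgue measure, which follows by factoring a plane rotation into three shears.\<close>

section \<open>Shears and plane rotations preserve Lebesgue measure\<close>

lemma nn_integral_lborel_split_Basis:
  fixes h :: "'a::euclidean_space \<Rightarrow> ennreal"
  assumes E: "E \<in> Basis" and [measurable]: "h \<in> borel_measurable borel"
  shows "(\<integral>\<^sup>+x. h x \<partial>lborel) =
    (\<integral>\<^sup>+f. (\<integral>\<^sup>+y. h (y *\<^sub>R E + (\<Sum>b\<in>Basis-{E}. f b *\<^sub>R b)) \<partial>lborel) \<partial>(\<Pi>\<^sub>M b\<in>Basis-{E}. lborel))"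
proof -
  interpret product_sigma_finite "\<lambda>_. lborel"
    by (simp add: product_sigma_finite_def sigma_finite_lborel)
  have Basis: "Basis = insert E (Basis - {E})" using E by auto
  have sum_insert: "(\<Sum>b\<in>insert E (Basis-{E}). (f(E:=y)) b *\<^sub>R b) = y *\<^sub>R E + (\<Sum>b\<in>Basis-{E}. f b *\<^sub>R b)"
    for f :: "'a \<Rightarrow> real" and y
    by (subst sum.insert) (auto intro!: sum.cong)
  have "(\<integral>\<^sup>+x. h x \<partial>lborel) = (\<integral>\<^sup>+f. h (\<Sum>b\<in>Basis. f b *\<^sub>R b) \<partial>(\<Pi>\<^sub>M b\<in>Basis. lborel))"
    by (subst lborel_eq) (simp add: nn_integral_distr)
  also have "\<dots> = (\<integral>\<^sup>+f. h (\<Sum>b\<in>insert E (Basis-{E}). f b *\<^sub>R b) \<partial>(\<Pi>\<^sub>M b\<in>insert E (Basis-{E}). lborel))"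
    using Basis by simp
  also have "\<dots> = (\<integral>\<^sup>+f. (\<integral>\<^sup>+y. h (\<Sum>b\<in>insert E (Basis-{E}). (f(E:=y)) b *\<^sub>R b) \<partial>lborel) \<partial>(\<Pi>\<^sub>M b\<in>Basis-{E}. lborel))"
    by (rule product_nn_integral_insert) auto
  finally show ?thesis by (simp only: sum_insert)
qed

definition shear :: "'a::euclidean_space \<Rightarrow> 'a \<Rightarrow> real \<Rightarrow> 'a \<Rightarrow> 'a" where
  "shear E F a x = x + (a * (x \<bullet> F)) *\<^sub>R E"

lemma shear_measurable [measurable]: "shear E F a \<in> borel_measurable borel"
  unfolding shear_def by measurable

lemma distr_lborel_shear:
  fixes E F :: "'a::euclidean_space"
  assumes E: "E \<in> Basis" and F: "F \<in> Basis" and "E \<noteq> F"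
  shows "distr lborel borel (shear E F a) = lborel"
proof (rule measure_eqI)
  fix X assume "X \<in> sets (distr lborel borel (shear E F a))"
  then have [measurable]: "X \<in> sets borel" by simp
  have "E \<bullet> F = 0" using assms by (simp add: inner_not_same_Basis)
  then have shift: "shear E F a (y *\<^sub>R E + r) = (a * (r \<bullet> F) + y) *\<^sub>R E + r" for y r
    by (simp add: shear_def inner_add_left algebra_simps)
  \<comment> \<open>along each line parallel to \<open>E\<close> the shear is a translation\<close>
  have line: "(\<integral>\<^sup>+y. indicator X (shear E F a (y *\<^sub>R E + r)) \<partial>lborel) = (\<integral>\<^sup>+y. indicator X (y *\<^sub>R E + r) \<partial>lborel)"
    for r
  proof -
    have "(\<integral>\<^sup>+y. indicator X (shear E F a (y *\<^sub>R E + r)) \<partial>lborel)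
        = (\<integral>\<^sup>+y. indicator X (y *\<^sub>R E + r) \<partial>distr lborel borel ((+) (a * (r \<bullet> F))))"
      by (subst nn_integral_distr) (auto simp: shift)
    then show ?thesis by (simp add: lborel_distr_plus)
  qed
  have "emeasure (distr lborel borel (shear E F a)) X = (\<integral>\<^sup>+x. indicator X (shear E F a x) \<partial>lborel)"
    using nn_integral_distr[of "shear E F a" lborel borel "indicator X"] by simp
  also have "\<dots> = (\<integral>\<^sup>+x. indicator X x \<partial>lborel)"
    by (subst (1 2) nn_integral_lborel_split_Basis[OF E]) (simp_all add: line)
  finally show "emeasure (distr lborel borel (shear E F a)) X = emeasure lborel X"
    by simp
qed simp

definition plane_rotation :: "'n::finite \<Rightarrow> 'n \<Rightarrow> real \<Rightarrow> real \<Rightarrow> real^'n \<Rightarrow> real^'n" where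
  "plane_rotation i j c s x =
    (\<chi> k. if k = i then c * x$i - s * x$j else if k = j then s * x$i + c * x$j else x$k)"

lemma plane_rotation_nth_first [simp]: "plane_rotation i j c s x $ i = c * x$i - s * x$j"
  by (simp add: plane_rotation_def)

lemma plane_rotation_nth_second [simp]: "i \<noteq> j \<Longrightarrow> plane_rotation i j c s x $ j = s * x$i + c * x$j"
  by (simp add: plane_rotation_def)

lemma plane_rotation_nth_other [simp]: "k \<noteq> i \<Longrightarrow> k \<noteq> j \<Longrightarrow> plane_rotation i j c s x $ k = x$k"
  by (simp add: plane_rotation_def)

lemma plane_rotation_measurable [measurable]: "plane_rotation i j c s \<in> borel_measurable borel"
  unfolding plane_rotation_def
  apply (intro borel_measurable_continuous_onI continuous_on_vec_lambda)
  subgoal for k by (cases "k = i"; cases "k = j") (simp_all add: continuous_intros)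
  done

lemma shear_axis: "shear (axis i 1) (axis j 1) a x = (\<chi> k. if k = i then x$i + a * x$j else x$k)"
proof -
  have "x \<bullet> axis j 1 = x$j" by (simp add: inner_axis)
  then show ?thesis by (simp add: shear_def vec_eq_iff axis_def)
qed

text \<open>Rotation by \<open>\<theta>\<close> factors into three shears with parameters \<open>-tan(\<theta>/2)\<close>, \<open>sin \<theta>\<close>, \<open>-tan(\<theta>/2)\<close>,
  and \<open>tan(\<theta>/2) = s / (1 + c)\<close>.\<close>
lemma plane_rotation_eq_shears:
  assumes "i \<noteq> j" and cs: "c\<^sup>2 + s\<^sup>2 = 1" and c: "c > -1"
  defines "\<tau> \<equiv> s / (1 + c)"
  shows "plane_rotation i j c s =
    shear (axis i 1) (axis j 1) (-\<tau>) \<circ> shear (axis j 1) (axis i 1) s \<circ> shear (axis i 1) (axis j 1) (-\<tau>)"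
proof -
  have h1: "\<tau> * s = 1 - c" using cs c by (simp add: \<tau>_def field_simps power2_eq_square)
  have h2: "\<tau> * c = s - \<tau>" using c by (simp add: \<tau>_def field_simps)
  have "c * a - s * b = a - \<tau> * b - \<tau> * (b + s * (a - \<tau> * b))"
    and "s * a + c * b = b + s * (a - \<tau> * b)" for a b
    using h1 h2 by algebra+
  then show ?thesis using assms(1)
    by (auto simp: fun_eq_iff plane_rotation_def shear_axis vec_eq_iff)
qed

lemma distr_lborel_plane_rotation:
  fixes i j :: "'n::finite"
  assumes "i \<noteq> j" and "c\<^sup>2 + s\<^sup>2 = 1" and "c > -1"
  shows "distr lborel borel (plane_rotation i j c s) = lborel"
proof -
  have axes: "axis i (1::real) \<in> Basis" "axis j (1::real) \<in> Basis" "axis i (1::real) \<noteq> axis j 1"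
    using assms by (auto simp: axis_eq_axis)
  let ?P = "shear (axis i 1) (axis j 1) (- (s / (1 + c))) :: real^'n \<Rightarrow> real^'n"
  let ?Q = "shear (axis j 1) (axis i 1) s :: real^'n \<Rightarrow> real^'n"
  have "distr lborel borel (plane_rotation i j c s) = distr (distr (distr lborel borel ?P) borel ?Q) borel ?P"
    unfolding plane_rotation_eq_shears[OF assms] by (simp add: distr_distr comp_assoc)
  also have "\<dots> = lborel"
    using axes by (simp add: distr_lborel_shear)
  finally show ?thesis .
qed

lemma norm_power2_vec_eq_sum: "(norm x)\<^sup>2 = (\<Sum>k\<in>UNIV. (x$k)\<^sup>2)" for x :: "real^'n::finite"
  unfolding power2_norm_eq_inner by (simp add: inner_vec_def power2_eq_square)

lemma norm_power2_vec_split: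
  fixes x :: "real^'n::finite"
  assumes "i \<noteq> j"
  shows "(norm x)\<^sup>2 = (x$i)\<^sup>2 + (x$j)\<^sup>2 + (\<Sum>k\<in>-{i,j}. (x$k)\<^sup>2)"
proof -
  have "(norm x)\<^sup>2 = (\<Sum>k\<in>UNIV. (x$k)\<^sup>2)"
    by (rule norm_power2_vec_eq_sum)
  also have "\<dots> = (\<Sum>k\<in>-{i,j}. (x$k)\<^sup>2) + (\<Sum>k\<in>{i,j}. (x$k)\<^sup>2)"
    by (subst sum.subset_diff[of "{i,j}"]) (auto simp: Compl_eq_Diff_UNIV)
  finally show ?thesis using assms by simp
qed

lemma norm_plane_rotation:
  assumes "i \<noteq> j" and "c\<^sup>2 + s\<^sup>2 = 1"
  shows "norm (plane_rotation i j c s x) = norm x"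
proof -
  have "(c * x$i - s * x$j)\<^sup>2 + (s * x$i + c * x$j)\<^sup>2 = (x$i)\<^sup>2 + (x$j)\<^sup>2"
    using assms(2) by algebra
  then have "(norm (plane_rotation i j c s x))\<^sup>2 = (norm x)\<^sup>2"
    using assms(1) by (simp add: norm_power2_vec_split[OF assms(1)])
  then show ?thesis by simp
qed

section \<open>The uniform distribution on the sphere\<close>

lemma space_sphere_unif [simp]: "space (sphere_unif :: (real^'n::finite) measure) = UNIV"
  by (simp add: sphere_unif_def)

lemma sets_sphere_unif [simp, measurable_cong]: "sets (sphere_unif :: (real^'n::finite) measure) = sets borel"
  by (simp add: sphere_unif_def)

lemma emeasure_lborel_ball_pos: "0 < r \<Longrightarrow> 0 < emeasure lborel (ball (c::'a::euclidean_space) r)"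
  by (simp add: emeasure_ball)

lemma emeasure_lborel_unit_ball_neq_0: "emeasure lborel (ball (0::'a::euclidean_space) 1) \<noteq> 0"
  using emeasure_lborel_ball_pos[of 1 "0::'a"] by simp

lemma emeasure_sphere_unif:
  assumes "A \<in> sets borel"
  shows "emeasure (sphere_unif :: (real^'n::finite) measure) A =
    emeasure lborel (ball 0 1 \<inter> (\<lambda>y. y /\<^sub>R norm y) -` A) / emeasure lborel (ball (0::real^'n) 1)"
proof -
  have "(\<lambda>y::real^'n. y /\<^sub>R norm y) -` A \<in> sets borel"
    using measurable_sets[of "\<lambda>y::real^'n. y /\<^sub>R norm y" borel borel A] assms by simp
  then show ?thesis
    using assms unfolding sphere_unif_def by (simp add: emeasure_distr emeasure_uniform_measure)
qed

lemma emeasure_sphere_unif_UNIV: "emeasure (sphere_unif :: (real^'n::finite) measure) UNIV = 1"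
proof -
  have "emeasure lborel (ball (0::real^'n) 1) / emeasure lborel (ball (0::real^'n) 1) = 1"
    by (rule ennreal_divide_self)
       (simp_all add: emeasure_lborel_unit_ball_neq_0 emeasure_lborel_ball_finite[simplified])
  then show ?thesis by (simp add: emeasure_sphere_unif)
qed

lemma finite_measure_sphere_unif: "finite_measure (sphere_unif :: (real^'n::finite) measure)"
  by (rule finite_measureI) (simp add: emeasure_sphere_unif_UNIV)

lemma AE_sphere_unif_norm: "AE x in (sphere_unif :: (real^'n::finite) measure). norm x = 1"
proof -
  have "AE y in uniform_measure lborel (ball (0::real^'n) 1). norm (y /\<^sub>R norm y) = 1"
    using AE_lborel_singleton[of 0]
    by (subst AE_uniform_measure)
       (auto elim!: eventually_mono simp: emeasure_lborel_unit_ball_neq_0 emeasure_lborel_ball_finite[simplified])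
  then show ?thesis unfolding sphere_unif_def by (subst AE_distr_iff) auto
qed

lemma integrable_sphere_unif:
  fixes f :: "real^'n::finite \<Rightarrow> real"
  assumes [measurable]: "f \<in> borel_measurable borel" and "\<And>x. norm x = 1 \<Longrightarrow> \<bar>f x\<bar> \<le> B"
  shows "integrable sphere_unif f"
proof -
  interpret finite_measure "sphere_unif :: (real^'n) measure" by (rule finite_measure_sphere_unif)
  show ?thesis
    using AE_sphere_unif_norm by (intro integrable_const_bound[where B=B]) (auto elim!: eventually_mono simp: assms(2))
qed

lemma distr_uniform_measure_lborel_invariant:
  fixes f :: "'a::euclidean_space \<Rightarrow> 'a"
  assumes [measurable]: "f \<in> borel_measurable borel" "B \<in> sets borel"
    and "distr lborel borel f = lborel" and "f -` B = B"
  shows "distr (uniform_measure lborel B) borel f = uniform_measure lborel B"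
proof (rule measure_eqI)
  fix X assume "X \<in> sets (distr (uniform_measure lborel B) borel f)"
  then have [measurable]: "X \<in> sets borel" by simp
  have [measurable]: "f -` X \<in> sets borel"
    using measurable_sets[OF assms(1), of X] by simp
  have "emeasure (distr (uniform_measure lborel B) borel f) X = emeasure lborel (f -` (B \<inter> X)) / emeasure lborel B"
    using assms(4) by (simp add: emeasure_distr emeasure_uniform_measure vimage_Int Int_commute)
  also have "emeasure lborel (f -` (B \<inter> X)) = emeasure lborel (B \<inter> X)"
    using emeasure_distr[of f lborel borel "B \<inter> X"] assms(3) by simp
  finally show "emeasure (distr (uniform_measure lborel B) borel f) X = emeasure (uniform_measure lborel B) X"
    by simp
qed simp

lemma plane_rotation_scaleR: "plane_rotation i j c s (a *\<^sub>R x) = a *\<^sub>R plane_rotation i j c s x"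
  by (simp add: plane_rotation_def vec_eq_iff algebra_simps)

lemma distr_sphere_unif_plane_rotation:
  fixes i j :: "'n::finite"
  assumes "i \<noteq> j" and "c\<^sup>2 + s\<^sup>2 = 1" and "c > -1"
  shows "distr sphere_unif borel (plane_rotation i j c s) = sphere_unif"
proof -
  let ?R = "plane_rotation i j c s"
  let ?U = "uniform_measure lborel (ball (0::real^'n) 1)"
  let ?N = "\<lambda>y::real^'n. y /\<^sub>R norm y"
  have "distr sphere_unif borel ?R = distr ?U borel (?R \<circ> ?N)"
    unfolding sphere_unif_def by (subst distr_distr) auto
  also have "?R \<circ> ?N = ?N \<circ> ?R"
    by (simp add: fun_eq_iff plane_rotation_scaleR norm_plane_rotation[OF assms(1,2)])
  also have "distr ?U borel (?N \<circ> ?R) = distr (distr ?U borel ?R) borel ?N"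
    by (subst distr_distr) auto
  also have "distr ?U borel ?R = ?U"
    using norm_plane_rotation[OF assms(1,2)] distr_lborel_plane_rotation[OF assms]
    by (intro distr_uniform_measure_lborel_invariant) auto
  finally show ?thesis
    unfolding sphere_unif_def .
qed

lemma integral_sphere_unif_plane_rotation:
  fixes f :: "real^'n::finite \<Rightarrow> real"
  assumes "i \<noteq> j" and "c\<^sup>2 + s\<^sup>2 = 1" and "c > -1" and [measurable]: "f \<in> borel_measurable borel"
  shows "(\<integral>x. f (plane_rotation i j c s x) \<partial>sphere_unif) = (\<integral>x. f x \<partial>sphere_unif)"
  using integral_distr[of "plane_rotation i j c s" sphere_unif borel f]
  by (simp add: distr_sphere_unif_plane_rotation[OF assms(1-3)])

section \<open>Caps and their second moments\<close>

lemma vec_nth_measurable [measurable]: "(\<lambda>x::real^'n::finite. x$k) \<in> borel_measurable borel"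
  by (intro borel_measurable_continuous_onI continuous_intros)

definition cap :: "'n::finite \<Rightarrow> real \<Rightarrow> (real^'n) set" where
  "cap i a = {x. a \<le> x$i}"

lemma cap_measurable [measurable]: "cap i a \<in> sets borel"
  unfolding cap_def by measurable

lemma measure_sphere_unif_cap_pos:
  fixes i :: "'n::finite"
  assumes "0 \<le> \<delta>" and "\<delta> < 1"
  shows "0 < measure sphere_unif (cap i \<delta>)"
proof -
  interpret finite_measure "sphere_unif :: (real^'n) measure" by (rule finite_measure_sphere_unif)
  let ?N = "\<lambda>y::real^'n. y /\<^sub>R norm y"
  define y0 where "y0 = (1/2) *\<^sub>R axis i (1::real)"
  define \<rho> where "\<rho> = (1 - \<delta>) / 4"
  have "ball y0 \<rho> \<subseteq> ball 0 1 \<inter> ?N -` cap i \<delta>"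
  proof
    fix y assume "y \<in> ball y0 \<rho>"
    then have "norm (y - y0) < \<rho>" by (simp add: dist_norm norm_minus_commute)
    moreover have "norm y \<le> norm y0 + norm (y - y0)" and "\<bar>(y - y0)$i\<bar> \<le> norm (y - y0)"
      using norm_triangle_ineq[of y0 "y - y0"] component_le_norm_cart[of "y - y0" i] by simp_all
    ultimately have ny: "norm y < 1/2 + \<rho>" and yi: "1/2 - \<rho> < y$i"
      by (auto simp: y0_def)
    have "\<delta> * norm y \<le> \<delta> * (1/2 + \<rho>)" using ny assms by (intro mult_left_mono) auto
    also have "\<dots> \<le> 1/2 - \<rho>"
    proof -
      have "1/2 - \<rho> - \<delta> * (1/2 + \<rho>) = (1 - \<delta>)\<^sup>2 / 4"
        by (simp add: \<rho>_def power2_eq_square field_simps)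
      then show ?thesis using zero_le_power2[of "1 - \<delta>"] by linarith
    qed
    finally have "\<delta> * norm y \<le> y$i" using yi by linarith
    moreover have "0 < y$i" using yi assms by (simp add: \<rho>_def field_simps)
    then have "0 < norm y" using component_le_norm_cart[of y i] by linarith
    ultimately show "y \<in> ball 0 1 \<inter> ?N -` cap i \<delta>"
      using ny assms by (simp add: cap_def \<rho>_def field_simps)
  qed
  moreover have "?N -` cap i \<delta> \<in> sets borel"
    using measurable_sets[of ?N borel borel "cap i \<delta>"] by simp
  ultimately have "emeasure lborel (ball y0 \<rho>) \<le> emeasure lborel (ball 0 1 \<inter> ?N -` cap i \<delta>)"
    by (intro emeasure_mono) auto
  moreover have "0 < emeasure lborel (ball y0 \<rho>)"
    using assms by (intro emeasure_lborel_ball_pos) (simp add: \<rho>_def)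
  ultimately have "0 < emeasure sphere_unif (cap i \<delta>)"
    using emeasure_lborel_ball_finite[of "0::real^'n" 1]
    by (simp add: emeasure_sphere_unif ennreal_zero_less_divide)
  then show ?thesis by (simp add: emeasure_eq_measure)
qed

definition cap_second_moment :: "'n::finite \<Rightarrow> real \<Rightarrow> 'n \<Rightarrow> real" where
  "cap_second_moment i a k = (LINT x:cap i a|sphere_unif. (x$k)\<^sup>2)"

lemma set_integrable_sphere_unif_power2:
  fixes A :: "(real^'n::finite) set"
  assumes [measurable]: "A \<in> sets borel"
  shows "set_integrable sphere_unif A (\<lambda>x. (x$k)\<^sup>2)"
  unfolding set_integrable_def
proof (rule integrable_sphere_unif[where B=1])
  fix x :: "real^'n" assume "norm x = 1"
  then have "(x$k)\<^sup>2 \<le> 1"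
    using component_le_norm_cart[of x k] by (simp add: abs_square_le_1)
  then show "\<bar>indicator A x *\<^sub>R (x$k)\<^sup>2\<bar> \<le> 1" by (simp add: indicator_def)
qed measurable

lemma sum_cap_second_moment: "(\<Sum>k\<in>UNIV. cap_second_moment i a k) = measure sphere_unif (cap i a)"
proof -
  interpret finite_measure "sphere_unif :: (real^'n) measure" by (rule finite_measure_sphere_unif)
  have "(\<Sum>k\<in>UNIV. cap_second_moment i a k) =
      (\<integral>x. (\<Sum>k\<in>UNIV. indicator (cap i a) x * (x$k)\<^sup>2) \<partial>sphere_unif)"
    using set_integrable_sphere_unif_power2[of "cap i a"]
    by (subst Bochner_Integration.integral_sum)
       (simp_all add: cap_second_moment_def set_lebesgue_integral_def set_integrable_def)
  also have "\<dots> = (\<integral>x. indicator (cap i a) x \<partial>sphere_unif)"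
    using AE_sphere_unif_norm
    by (intro integral_cong_AE) (auto elim!: eventually_mono
        simp: sum_distrib_left[symmetric] norm_power2_vec_eq_sum[symmetric])
  finally show ?thesis by simp
qed

lemma cap_second_moment_swap:
  assumes "j \<noteq> i" and "k \<noteq> i"
  shows "cap_second_moment i a k = cap_second_moment i a j"
proof (cases "j = k")
  case False
  let ?R = "plane_rotation j k 0 1"
  have "cap_second_moment i a j = (\<integral>x. indicator (cap i a) (?R x) * ((?R x)$j)\<^sup>2 \<partial>sphere_unif)"
    unfolding cap_second_moment_def set_lebesgue_integral_def
    using False by (subst integral_sphere_unif_plane_rotation) auto
  also have "\<dots> = cap_second_moment i a k"
    using assms False by (simp add: cap_second_moment_def set_lebesgue_integral_def cap_def indicator_def)
  finally show ?thesis by simp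
qed simp

lemma cap_second_moment_off_axis:
  fixes i j :: "'n::finite"
  assumes "i \<noteq> j"
  shows "(real CARD('n) - 1) * cap_second_moment i a j = measure sphere_unif (cap i a) - cap_second_moment i a i"
proof -
  have "(\<Sum>k\<in>UNIV. cap_second_moment i a k) = cap_second_moment i a i + (\<Sum>k\<in>-{i}. cap_second_moment i a j)"
    using cap_second_moment_swap[OF assms[symmetric]]
    by (simp add: sum.remove[of UNIV i] Compl_eq_Diff_UNIV)
  also have "(\<Sum>k\<in>-{i}. cap_second_moment i a j) = (real CARD('n) - 1) * cap_second_moment i a j"
    by (simp add: Compl_eq_Diff_UNIV card_Diff_singleton of_nat_diff)
  finally show ?thesis by (simp add: sum_cap_second_moment)
qed

lemma cap_second_moment_axis_bound:
  fixes i :: "'n::finite"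
  assumes "0 \<le> a" and "t\<^sup>2 + w\<^sup>2 = 1"
  shows "w\<^sup>2 * (measure sphere_unif (cap i a) - measure sphere_unif (cap i t))
    \<le> measure sphere_unif (cap i a) - cap_second_moment i a i"
proof -
  interpret finite_measure "sphere_unif :: (real^'n) measure" by (rule finite_measure_sphere_unif)
  have int_cap: "integrable sphere_unif (indicator (cap i b) :: real^'n \<Rightarrow> real)" for b
    by (rule integrable_sphere_unif[where B=1]) (auto simp: indicator_def)
  have int_moment: "integrable sphere_unif (\<lambda>x::real^'n. indicator (cap i a) x * (x$i)\<^sup>2)"
    using set_integrable_sphere_unif_power2[of "cap i a" i] by (simp add: set_integrable_def)
  \<comment> \<open>off the smaller cap, \<open>x$i < t\<close> and hence \<open>1 - (x$i)\<^sup>2 \<ge> w\<^sup>2\<close>\<close>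
  have "(\<integral>x. w\<^sup>2 * (indicator (cap i a) x - indicator (cap i t) x) \<partial>sphere_unif)
      \<le> (\<integral>x. indicator (cap i a) x - indicator (cap i a) x * (x$i)\<^sup>2 \<partial>sphere_unif)"
  proof (intro integral_mono_AE)
    show "AE x in sphere_unif. w\<^sup>2 * (indicator (cap i a) x - indicator (cap i t) x)
        \<le> indicator (cap i a) x - indicator (cap i a) x * (x$i)\<^sup>2"
      using AE_sphere_unif_norm
    proof eventually_elim
      case (elim x)
      then have "(x$i)\<^sup>2 \<le> 1"
        using component_le_norm_cart[of x i] by (simp add: abs_square_le_1)
      moreover have "(x$i)\<^sup>2 \<le> t\<^sup>2" if "a \<le> x$i" "x$i < t"
        using that assms(1) by (intro power_mono) auto
      ultimately show ?case
        using assms(2) by (cases "a \<le> x$i"; cases "t \<le> x$i") (auto simp: cap_def)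
    qed
  qed (use int_cap int_moment in simp_all)
  then show ?thesis
    using int_cap int_moment by (simp add: cap_second_moment_def set_lebesgue_integral_def)
qed

section \<open>Packing three caps into a larger one\<close>

lemma disc_cap_rotation_disjoint:
  fixes a b c s t :: real
  assumes "a\<^sup>2 + b\<^sup>2 \<le> 1" and "c\<^sup>2 + s\<^sup>2 = 1" and "0 < t" and "2 + 2 * c < 4 * t\<^sup>2"
    and "t \<le> a" and "t \<le> c * a + s * b"
  shows False
proof -
  have len: "(1 + c)\<^sup>2 + s\<^sup>2 = 2 + 2 * c" using assms(2) by algebra
  have "(2 * t)\<^sup>2 \<le> ((1 + c) * a + s * b)\<^sup>2"
    using assms(3,5,6) by (intro power_mono) (auto simp: algebra_simps)
  \<comment> \<open>Cauchy-Schwarz against the vector \<open>(1 + c, s)\<close> of squared length \<open>2 + 2c\<close>\<close>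
  also have "\<dots> \<le> ((1 + c)\<^sup>2 + s\<^sup>2) * (a\<^sup>2 + b\<^sup>2)"
  proof -
    have "((1 + c)\<^sup>2 + s\<^sup>2) * (a\<^sup>2 + b\<^sup>2) - ((1 + c) * a + s * b)\<^sup>2 = ((1 + c) * b - s * a)\<^sup>2"
      by algebra
    then show ?thesis using zero_le_power2[of "(1 + c) * b - s * a"] by linarith
  qed
  also have "\<dots> \<le> 2 + 2 * c"
  proof -
    have "0 \<le> 2 + 2 * c" using len zero_le_power2[of "1 + c"] zero_le_power2[of s] by linarith
    from mult_left_mono[OF assms(1) this] show ?thesis unfolding len by simp
  qed
  finally show False using assms(4) by (simp add: power_mult_distrib)
qed

lemma disc_rotated_cap_subset:
  fixes a b c s t w :: real
  assumes "a\<^sup>2 + b\<^sup>2 \<le> 1" and "c\<^sup>2 + s\<^sup>2 = 1" and "t\<^sup>2 + w\<^sup>2 = 1"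
    and "0 \<le> c" and "0 \<le> s" and "0 \<le> w" and "0 < t" and "t \<le> c * a + s * b"
  shows "c * t - s * w \<le> a"
proof -
  \<comment> \<open>\<open>(u, v)\<close> is \<open>(a, b)\<close> rotated back by the angle \<open>(c, s)\<close>\<close>
  define u where "u = c * a + s * b"
  define v where "v = c * b - s * a"
  have "u\<^sup>2 + v\<^sup>2 = (c\<^sup>2 + s\<^sup>2) * (a\<^sup>2 + b\<^sup>2)" and a: "c * u - s * v = (c\<^sup>2 + s\<^sup>2) * a"
    unfolding u_def v_def by algebra+
  then have "u\<^sup>2 + v\<^sup>2 \<le> 1" and a: "a = c * u - s * v" using assms(1,2) by simp_all
  moreover have "t\<^sup>2 \<le> u\<^sup>2" using assms(7,8) unfolding u_def by (intro power_mono) auto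
  ultimately have "v\<^sup>2 \<le> w\<^sup>2" using assms(3) by linarith
  then have "v \<le> w" using assms(6) by (rule power2_le_imp_le)
  then have "s * v \<le> s * w" using assms(5) by (rule mult_left_mono)
  moreover have "c * t \<le> c * u" using assms(8,4) unfolding u_def by (rule mult_left_mono)
  ultimately show ?thesis using a by linarith
qed

lemma three_caps_packing:
  fixes i j :: "'n::finite"
  assumes "i \<noteq> j" and "c\<^sup>2 + s\<^sup>2 = 1" and "t\<^sup>2 + w\<^sup>2 = 1" and "0 \<le> c" and "c < t" and "0 \<le> s"
    and "0 \<le> w" and "2 + 2 * c < 4 * t\<^sup>2" and "\<delta> \<le> c * t - s * w"
  shows "3 * measure sphere_unif (cap i t) \<le> measure sphere_unif (cap i \<delta>)"
proof -
  interpret finite_measure "sphere_unif :: (real^'n) measure" by (rule finite_measure_sphere_unif)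
  have t: "0 < t" using assms(4,5) by linarith
  have "c\<^sup>2 \<le> 1" using assms(2) zero_le_power2[of s] by linarith
  then have "c * t \<le> t" using power2_le_imp_le[of c 1] mult_right_mono[of c 1 t] t by simp
  then have \<delta>t: "\<delta> \<le> t" using assms(6,7,9) mult_nonneg_nonneg[of s w] by linarith
  let ?T = "indicator (cap i t) :: real^'n \<Rightarrow> real"
  let ?R\<^sub>1 = "plane_rotation i j c (- s)" and ?R\<^sub>2 = "plane_rotation i j c s"
  have int: "integrable sphere_unif (\<lambda>x. indicator (cap i b) (f x) :: real)"
    if [measurable]: "f \<in> borel_measurable borel" for b and f :: "real^'n \<Rightarrow> real^'n"
    by (rule integrable_sphere_unif[where B=1]) (auto simp: indicator_def)
  have rotated: "(\<integral>x. ?T (plane_rotation i j c s' x) \<partial>sphere_unif) = measure sphere_unif (cap i t)"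
    if "s' = s \<or> s' = - s" for s'
    using integral_sphere_unif_plane_rotation[OF assms(1), of c s' ?T] that assms(2,4) by auto
  have "(\<integral>x. ?T x + ?T (?R\<^sub>1 x) + ?T (?R\<^sub>2 x) \<partial>sphere_unif) \<le> (\<integral>x. indicator (cap i \<delta>) x \<partial>sphere_unif)"
  proof (intro integral_mono_AE)
    show "AE x in sphere_unif. ?T x + ?T (?R\<^sub>1 x) + ?T (?R\<^sub>2 x) \<le> indicator (cap i \<delta>) x"
      using AE_sphere_unif_norm
    proof eventually_elim
      case (elim x)
      define a b where "a = x$i" and "b = x$j"
      have ab: "a\<^sup>2 + b\<^sup>2 \<le> 1" and ab': "a\<^sup>2 + (- b)\<^sup>2 \<le> 1"
        using norm_power2_vec_split[OF assms(1), of x] elim sum_nonneg[of "-{i,j}" "\<lambda>k. (x$k)\<^sup>2"]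
        by (simp_all add: a_def b_def)
      have "a\<^sup>2 \<le> 1" using ab zero_le_power2[of b] by linarith
      then have "a \<le> 1" using power2_le_imp_le[of a 1] by simp
      then have "c * a < t" using assms(4,5) mult_left_mono[of a 1 c] by linarith
      moreover have "t \<le> a \<Longrightarrow> \<delta> \<le> a" and "t \<le> c * a + s * b \<Longrightarrow> \<delta> \<le> a" and "t \<le> c * a - s * b \<Longrightarrow> \<delta> \<le> a"
        using disc_rotated_cap_subset[OF ab assms(2,3,4,6,7) t] disc_rotated_cap_subset[OF ab' assms(2,3,4,6,7) t]
          assms(9) \<delta>t by auto
      moreover have "\<not> (t \<le> a \<and> t \<le> c * a + s * b)" and "\<not> (t \<le> a \<and> t \<le> c * a - s * b)"
        using disc_cap_rotation_disjoint[OF ab assms(2) t assms(8)]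
          disc_cap_rotation_disjoint[OF ab' assms(2) t assms(8)] by auto
      ultimately show ?case by (auto simp: cap_def indicator_def a_def b_def)
    qed
  qed (use int[of id] int in simp_all)
  then show ?thesis
    using int[of id] int rotated by (simp add: integral_indicator)
qed

lemma rational_circle_point:
  fixes a b g :: real
  assumes "a + b \<noteq> 0" and "g\<^sup>2 = 4 * a * b"
  shows "((a - b) / (a + b))\<^sup>2 + (g / (a + b))\<^sup>2 = 1"
proof -
  have "(a - b)\<^sup>2 + g\<^sup>2 = (a + b)\<^sup>2" using assms(2) by algebra
  then show ?thesis using assms(1) by (simp add: power_divide add_divide_distrib[symmetric])
qed

lemma packing_polynomial_bound:
  fixes y :: real
  assumes "0 \<le> y" and "y \<le> 1"
  shows "y\<^sup>2 * (2 + y)^3 * (16 + y)\<^sup>2 \<le> 128 * (1 + y)^6"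
proof -
  have "(16 + y)\<^sup>2 \<le> 17\<^sup>2" using assms by (intro power_mono) auto
  then have "y\<^sup>2 * (2 + y)^3 * (16 + y)\<^sup>2 \<le> y\<^sup>2 * (2 + y)^3 * 17\<^sup>2"
    using assms by (intro mult_left_mono) auto
  \<comment> \<open>the remaining gap, written in the Bernstein basis of \<open>[0, 1]\<close>, has nonnegative coefficients\<close>
  moreover have "128 * (1 + y)^6 - y\<^sup>2 * (2 + y)^3 * 17\<^sup>2 =
     128 * (1-y)^6 + 1536 * y * (1-y)^5 + 5368 * y^2 * (1-y)^4 + 7764 * y^3 * (1-y)^3
     + 4710 * y^4 * (1-y)^2 + 1167 * y^5 * (1-y) + 389 * y^6"
    by algebra
  moreover have "0 \<le> 128 * (1-y)^6 + 1536 * y * (1-y)^5 + 5368 * y^2 * (1-y)^4 + 7764 * y^3 * (1-y)^3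
     + 4710 * y^4 * (1-y)^2 + 1167 * y^5 * (1-y) + 389 * y^6"
    using assms by (intro add_nonneg_nonneg mult_nonneg_nonneg) auto
  ultimately show ?thesis by linarith
qed

text \<open>The cap half-angle \<open>\<alpha>\<close> (\<open>cos \<alpha> = t\<close>) and the rotation angle \<open>\<theta>\<close> (\<open>cos \<theta> = c\<close>) satisfy
  \<open>2\<alpha> < \<theta>\<close> and \<open>\<theta> + \<alpha> \<le> arccos \<delta>\<close>. With \<open>y = (1 - \<delta>) / (1 + \<delta>)\<close> both are chosen as rational
  points of the unit circle, \<open>tan\<^sup>2(\<theta>/2) = 16 y / 49\<close> and \<open>tan\<^sup>2(\<alpha>/2) = y / 16\<close>.\<close>
lemma cap_packing_parameters:
  fixes \<delta> :: real
  assumes "0 < \<delta>" and "\<delta> < 1"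
  obtains c s t w where "c\<^sup>2 + s\<^sup>2 = 1" and "t\<^sup>2 + w\<^sup>2 = 1" and "0 \<le> c" and "c < t" and "0 \<le> s"
    and "0 \<le> w" and "2 + 2 * c < 4 * t\<^sup>2" and "\<delta> \<le> c * t - s * w"
    and "(3/4 - \<delta>/2 - \<delta>\<^sup>2/4) ^ 3 \<le> 2 * w\<^sup>2"
proof
  define y where "y = (1 - \<delta>) / (1 + \<delta>)"
  define h where "h = sqrt y"
  have y0: "0 < y" and y1: "y < 1" using assms by (auto simp: y_def field_simps)
  have h0: "0 \<le> h" and hh: "h\<^sup>2 = y" using y0 by (auto simp: h_def)
  have \<delta>: "\<delta> = (1 - y) / (1 + y)" using assms by (simp add: y_def field_simps)
  define c where "c = (49 - 16 * y) / (49 + 16 * y)"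
  define s where "s = 56 * h / (49 + 16 * y)"
  define t where "t = (16 - y) / (16 + y)"
  define w where "w = 8 * h / (16 + y)"
  have pos: "0 < 49 + 16 * y" "0 < 16 + y" "0 < 1 + y" using y0 by auto
  show "c\<^sup>2 + s\<^sup>2 = 1" unfolding c_def s_def
    by (rule rational_circle_point) (use pos hh in \<open>simp_all add: power_mult_distrib\<close>)
  show "t\<^sup>2 + w\<^sup>2 = 1" unfolding t_def w_def
    by (rule rational_circle_point) (use pos hh in \<open>simp_all add: power_mult_distrib\<close>)
  show "0 \<le> c" "0 \<le> s" "0 \<le> w" using y1 h0 pos by (simp_all add: c_def s_def w_def)
  show "c < t"
    using y0 pos by (simp add: c_def t_def divide_simps algebra_simps)
  have "49 * (16 + y)\<^sup>2 < (16 - y)\<^sup>2 * (49 + 16 * y)"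
  proof -
    have "(16 - y)\<^sup>2 * (49 + 16 * y) - 49 * (16 + y)\<^sup>2 = 16 * y * ((1 - y) * (31 - y) + 29)"
      by algebra
    moreover have "0 < 16 * y * ((1 - y) * (31 - y) + 29)"
      using y0 y1 by (intro mult_pos_pos add_nonneg_pos mult_nonneg_nonneg) auto
    ultimately show ?thesis by linarith
  qed
  then show "2 + 2 * c < 4 * t\<^sup>2"
    using pos by (simp add: c_def t_def power_divide divide_simps)
  have "(1 - y) * ((49 + 16 * y) * (16 + y)) \<le> ((49 - 16 * y) * (16 - y) - 448 * y) * (1 + y)"
  proof -
    have "((49 - 16 * y) * (16 - y) - 448 * y) * (1 + y) - (1 - y) * ((49 + 16 * y) * (16 + y))
        = 2 * y * (16 * (1 - y) * (13 - y) + 47)"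
      by algebra
    moreover have "0 \<le> 2 * y * (16 * (1 - y) * (13 - y) + 47)" using y0 y1 by simp
    ultimately show ?thesis by linarith
  qed
  then have "(1 - y) / (1 + y) \<le> ((49 - 16 * y) * (16 - y) - 448 * y) / ((49 + 16 * y) * (16 + y))"
    using pos by (simp add: divide_simps)
  moreover have "c * t - s * w = ((49 - 16 * y) * (16 - y) - 448 * y) / ((49 + 16 * y) * (16 + y))"
    using pos hh by (simp add: c_def s_def t_def w_def divide_simps power2_eq_square)
  ultimately show "\<delta> \<le> c * t - s * w"
    using \<delta> by simp
  have "3/4 - \<delta>/2 - \<delta>\<^sup>2/4 = y * (2 + y) / (1 + y)\<^sup>2"
    unfolding \<delta> using pos by (simp add: divide_simps power2_eq_square) algebra
  moreover have "2 * w\<^sup>2 = 128 * y / (16 + y)\<^sup>2"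
    using hh by (simp add: w_def power_divide power_mult_distrib)
  moreover have "(y * (2 + y))^3 * (16 + y)\<^sup>2 \<le> 128 * y * ((1 + y)\<^sup>2)^3"
  proof -
    have "y * (y\<^sup>2 * (2 + y)^3 * (16 + y)\<^sup>2) \<le> y * (128 * (1 + y)^6)"
      using packing_polynomial_bound[of y] y0 y1 by (intro mult_left_mono) auto
    moreover have "(y * (2 + y))^3 * (16 + y)\<^sup>2 = y * (y\<^sup>2 * (2 + y)^3 * (16 + y)\<^sup>2)"
      and "128 * y * ((1 + y)\<^sup>2)^3 = y * (128 * (1 + y)^6)"
      by algebra+
    ultimately show ?thesis by (simp only:)
  qed
  then have "(y * (2 + y) / (1 + y)\<^sup>2) ^ 3 \<le> 128 * y / (16 + y)\<^sup>2"
    using pos by (simp add: power_divide divide_simps)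
  ultimately show "(3/4 - \<delta>/2 - \<delta>\<^sup>2/4) ^ 3 \<le> 2 * w\<^sup>2"
    by simp
qed

lemma c2_ge_cap_packing:
  fixes i j :: "'n::finite"
  assumes "0 \<le> \<delta>" and "\<delta> < 1" and "i \<noteq> j"
    and "c\<^sup>2 + s\<^sup>2 = 1" and "t\<^sup>2 + w\<^sup>2 = 1" and "0 \<le> c" and "c < t" and "0 \<le> s" and "0 \<le> w"
    and "2 + 2 * c < 4 * t\<^sup>2" and "\<delta> \<le> c * t - s * w"
  shows "2 * w\<^sup>2 / (3 * real CARD('n)) \<le> c2 \<delta> i j"
proof -
  define \<mu> where "\<mu> = measure (sphere_unif :: (real^'n) measure) (cap i \<delta>)"
  define \<mu>\<^sub>t where "\<mu>\<^sub>t = measure (sphere_unif :: (real^'n) measure) (cap i t)"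
  define d where "d = real CARD('n)"
  define m where "m = cap_second_moment i \<delta> j"
  have "0 < \<mu>" unfolding \<mu>_def using assms(1,2) by (rule measure_sphere_unif_cap_pos)
  have "card {i, j} \<le> CARD('n)" by (rule card_mono) auto
  then have "2 \<le> d" using assms(3) by (simp add: d_def)
  have "3 * \<mu>\<^sub>t \<le> \<mu>" unfolding \<mu>_def \<mu>\<^sub>t_def using assms(3-) by (rule three_caps_packing)
  then have "w\<^sup>2 * ((2/3) * \<mu>) \<le> w\<^sup>2 * (\<mu> - \<mu>\<^sub>t)" by (intro mult_left_mono) auto
  also have "\<dots> \<le> (d - 1) * m"
    using cap_second_moment_axis_bound[OF assms(1,5), of i] cap_second_moment_off_axis[OF assms(3), of \<delta>]
    by (simp add: \<mu>_def \<mu>\<^sub>t_def d_def m_def)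
  finally have moment: "w\<^sup>2 * ((2/3) * \<mu>) \<le> (d - 1) * m" .
  moreover have "0 \<le> w\<^sup>2 * ((2/3) * \<mu>)" using \<open>0 < \<mu>\<close> by simp
  ultimately have "0 \<le> (d - 1) * m" by linarith
  then have "0 \<le> m" using \<open>2 \<le> d\<close> by (simp add: zero_le_mult_iff)
  with moment have "2 * w\<^sup>2 * \<mu> \<le> 3 * d * m" by (simp add: algebra_simps)
  then have "2 * w\<^sup>2 / (3 * d) \<le> m / \<mu>"
    using \<open>0 < \<mu>\<close> \<open>2 \<le> d\<close> by (simp add: field_simps)
  also have "m / \<mu> = c2 \<delta> i j"
    by (simp add: c2_def cond_expect_event_def m_def cap_second_moment_def \<mu>_def cap_def)
  finally show ?thesis by (simp add: d_def)
qed

theorem lemma6: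
  fixes \<delta> :: real and i j :: "'n::finite"
  assumes "0 < \<delta>" and "\<delta> < 1" and "i \<noteq> j"
  shows "c2 \<delta> i j \<ge> 1 / (3 * real CARD('n)) * (3/4 - \<delta>/2 - \<delta>\<^sup>2/4) ^ 3"
proof -
  obtain c s t w where "c\<^sup>2 + s\<^sup>2 = 1" and "t\<^sup>2 + w\<^sup>2 = 1" and "0 \<le> c" and "c < t" and "0 \<le> s"
    and "0 \<le> w" and "2 + 2 * c < 4 * t\<^sup>2" and "\<delta> \<le> c * t - s * w"
    and K: "(3/4 - \<delta>/2 - \<delta>\<^sup>2/4) ^ 3 \<le> 2 * w\<^sup>2"
    using cap_packing_parameters[OF assms(1,2)] by blast
  then have "2 * w\<^sup>2 / (3 * real CARD('n)) \<le> c2 \<delta> i j"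
    using assms by (intro c2_ge_cap_packing) auto
  moreover have "(3/4 - \<delta>/2 - \<delta>\<^sup>2/4) ^ 3 / (3 * real CARD('n)) \<le> 2 * w\<^sup>2 / (3 * real CARD('n))"
    using K by (intro divide_right_mono) auto
  ultimately show ?thesis by simp
qed

end
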